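(* Let $(G,X,\Gamma)$ be a $(\mu,\nu)$-path system group. Assume that $G$ contains a constricting element. Then either $G$ is virtually cyclic or $G$ contains a free subgroup of rank two.
   Context: A path in a metric space $X$ is a rectifiable continuous map $\alpha\colon[a,b]\to X$ parametrised by arc length; it is a $(\kappa,\lambda)$-quasi-geodesic if $d(\alpha(t),\alpha(t'))\le |t-t'|\le \kappa\, d(\alpha(t),\alpha(t'))+\lambda$ for all $t,t'$. A $(\mu,\nu)$-path system on a geodesic metric space $X$ is a collection $\Gamma$ of paths closed under subpaths, such that any two points are joined by an element of $\Gamma$ and every element of $\Gamma$ is a $(\mu,\nu)$-quasi-geodesic. A $(\mu,\nu)$-path system group $(G,X,\Gamma)$ is a group $G$ acting properly by isometries on a geodesic metric space $X$ (balls $B_G(x,r)=\{g: d(x,gx)\le r\}$ finite) with $\Gamma$ a $G$-invariant $(\mu,\nu)$-path system. A subset $A\subseteq X$ is $\delta$-constricting if there is $\pi_A\colon X\to A$ with (CS1) $d(x,\pi_A(x))\le\delta$ for $x\in A$, and (CS2) for all $x,y\in X$ and $\gamma\in\Gamma$ joining $x$ to $y$, if $d(\pi_A(x),\pi_A(y))>\delta$ then $\gamma$ meets $B_X(\pi_A(x),\delta)$ and $B_X(\pi_A(y),\delta)$. An element $g\in G$ is constricting if it has infinite order and for some $\delta\ge0$ there is a $\langle g\rangle$-invariant $\delta$-constricting subset $A$ on which $\langle g\rangle$ acts $\delta$-coboundedly (for all $a,a'\in A$ there is $k\in\langle g\rangle$ with $d(a,ka')\le\delta$). *)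

theory Defs
  imports "HOL-Analysis.Analysis" "HOL-Algebra.Algebra"
begin

text \<open>A path is represented as a triple (a, b, alpha), with domain the interval [a,b];
  values of alpha outside [a,b] are irrelevant.\<close>

type_synonym 'x rpath = "real \<times> real \<times> (real \<Rightarrow> 'x)"

definition partition_sums :: "(real \<Rightarrow> 'x::metric_space) \<Rightarrow> real \<Rightarrow> real \<Rightarrow> real set" where
  "partition_sums \<alpha> s t =
     {(\<Sum>i<n. dist (\<alpha> (p i)) (\<alpha> (p (Suc i)))) | p n.
        p 0 = s \<and> p n = t \<and> (\<forall>i<n. p i \<le> p (Suc i))}"

definition curve_length :: "(real \<Rightarrow> 'x::metric_space) \<Rightarrow> real \<Rightarrow> real \<Rightarrow> real" where
  "curve_length \<alpha> s t = Sup (partition_sums \<alpha> s t)"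

definition rectifiable_on :: "(real \<Rightarrow> 'x::metric_space) \<Rightarrow> real \<Rightarrow> real \<Rightarrow> bool" where
  "rectifiable_on \<alpha> a b \<longleftrightarrow> continuous_on {a..b} \<alpha> \<and> bdd_above (partition_sums \<alpha> a b)"

definition is_path :: "'x::metric_space rpath \<Rightarrow> bool" where
  "is_path \<gamma> \<longleftrightarrow> (case \<gamma> of (a, b, \<alpha>) \<Rightarrow>
     a \<le> b \<and> rectifiable_on \<alpha> a b \<and>
     (\<forall>s t. a \<le> s \<and> s \<le> t \<and> t \<le> b \<longrightarrow> curve_length \<alpha> s t = t - s))"

definition quasi_geodesic :: "real \<Rightarrow> real \<Rightarrow> 'x::metric_space rpath \<Rightarrow> bool" where
  "quasi_geodesic \<kappa> lam \<gamma> \<longleftrightarrow> (case \<gamma> of (a, b, \<alpha>) \<Rightarrow>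
     (\<forall>t\<in>{a..b}. \<forall>t'\<in>{a..b}.
        dist (\<alpha> t) (\<alpha> t') \<le> \<bar>t - t'\<bar> \<and> \<bar>t - t'\<bar> \<le> \<kappa> * dist (\<alpha> t) (\<alpha> t') + lam))"

text \<open>Membership in a path collection, up to the (irrelevant) values outside the domain.\<close>
definition in_paths :: "'x rpath set \<Rightarrow> 'x rpath \<Rightarrow> bool" where
  "in_paths \<Gamma> \<gamma> \<longleftrightarrow> (case \<gamma> of (a, b, \<alpha>) \<Rightarrow>
     (\<exists>\<beta>. (a, b, \<beta>) \<in> \<Gamma> \<and> (\<forall>t\<in>{a..b}. \<beta> t = \<alpha> t)))"

definition joins :: "'x rpath \<Rightarrow> 'x \<Rightarrow> 'x \<Rightarrow> bool" where
  "joins \<gamma> x y \<longleftrightarrow> (case \<gamma> of (a, b, \<alpha>) \<Rightarrow> \<alpha> a = x \<and> \<alpha> b = y)"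

definition geodesic_space :: "'x::metric_space itself \<Rightarrow> bool" where
  "geodesic_space _ \<longleftrightarrow> (\<forall>x y::'x. \<exists>\<alpha>. \<alpha> 0 = x \<and> \<alpha> (dist x y) = y \<and>
      (\<forall>s\<in>{0..dist x y}. \<forall>t\<in>{0..dist x y}. dist (\<alpha> s) (\<alpha> t) = \<bar>s - t\<bar>))"

definition path_system :: "real \<Rightarrow> real \<Rightarrow> 'x::metric_space rpath set \<Rightarrow> bool" where
  "path_system \<mu> \<nu> \<Gamma> \<longleftrightarrow>
     (\<forall>\<gamma>\<in>\<Gamma>. is_path \<gamma>) \<and>
     (\<forall>a b \<alpha> a' b'. (a, b, \<alpha>) \<in> \<Gamma> \<and> a \<le> a' \<and> a' \<le> b' \<and> b' \<le> b \<longrightarrow> in_paths \<Gamma> (a', b', \<alpha>)) \<and>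
     (\<forall>x y. \<exists>\<gamma>\<in>\<Gamma>. joins \<gamma> x y) \<and>
     (\<forall>\<gamma>\<in>\<Gamma>. quasi_geodesic \<mu> \<nu> \<gamma>)"

definition isometric_action :: "('g, 'm) monoid_scheme \<Rightarrow> ('g \<Rightarrow> 'x::metric_space \<Rightarrow> 'x) \<Rightarrow> bool" where
  "isometric_action G \<phi> \<longleftrightarrow>
     \<phi> \<one>\<^bsub>G\<^esub> = id \<and>
     (\<forall>g\<in>carrier G. \<forall>h\<in>carrier G. \<phi> (g \<otimes>\<^bsub>G\<^esub> h) = \<phi> g \<circ> \<phi> h) \<and>
     (\<forall>g\<in>carrier G. surj (\<phi> g) \<and> (\<forall>x y. dist (\<phi> g x) (\<phi> g y) = dist x y))"

definition proper_action :: "('g, 'm) monoid_scheme \<Rightarrow> ('g \<Rightarrow> 'x::metric_space \<Rightarrow> 'x) \<Rightarrow> bool" where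
  "proper_action G \<phi> \<longleftrightarrow> (\<forall>x r. finite {g \<in> carrier G. dist x (\<phi> g x) \<le> r})"

definition path_system_group ::
  "real \<Rightarrow> real \<Rightarrow> ('g, 'm) monoid_scheme \<Rightarrow> ('g \<Rightarrow> 'x::metric_space \<Rightarrow> 'x) \<Rightarrow> 'x rpath set \<Rightarrow> bool" where
  "path_system_group \<mu> \<nu> G \<phi> \<Gamma> \<longleftrightarrow>
     group G \<and> geodesic_space TYPE('x) \<and> isometric_action G \<phi> \<and> proper_action G \<phi> \<and>
     path_system \<mu> \<nu> \<Gamma> \<and>
     (\<forall>g\<in>carrier G. \<forall>a b \<alpha>. (a, b, \<alpha>) \<in> \<Gamma> \<longrightarrow> in_paths \<Gamma> (a, b, \<phi> g \<circ> \<alpha>))"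

definition constricting_map :: "'x::metric_space rpath set \<Rightarrow> real \<Rightarrow> 'x set \<Rightarrow> ('x \<Rightarrow> 'x) \<Rightarrow> bool" where
  "constricting_map \<Gamma> \<delta> A \<pi> \<longleftrightarrow>
     (\<forall>x. \<pi> x \<in> A) \<and>
     (\<forall>x\<in>A. dist x (\<pi> x) \<le> \<delta>) \<and>
     (\<forall>x y a b \<alpha>. (a, b, \<alpha>) \<in> \<Gamma> \<and> joins (a, b, \<alpha>) x y \<and> dist (\<pi> x) (\<pi> y) > \<delta> \<longrightarrow>
        (\<exists>t\<in>{a..b}. \<alpha> t \<in> cball (\<pi> x) \<delta>) \<and> (\<exists>t\<in>{a..b}. \<alpha> t \<in> cball (\<pi> y) \<delta>))"

definition constricting_set :: "'x::metric_space rpath set \<Rightarrow> real \<Rightarrow> 'x set \<Rightarrow> bool" where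
  "constricting_set \<Gamma> \<delta> A \<longleftrightarrow> (\<exists>\<pi>. constricting_map \<Gamma> \<delta> A \<pi>)"

definition infinite_order :: "('g, 'm) monoid_scheme \<Rightarrow> 'g \<Rightarrow> bool" where
  "infinite_order G g \<longleftrightarrow> (\<forall>n::nat. n \<ge> 1 \<longrightarrow> g [^]\<^bsub>G\<^esub> n \<noteq> \<one>\<^bsub>G\<^esub>)"

definition constricting_element ::
  "('g, 'm) monoid_scheme \<Rightarrow> ('g \<Rightarrow> 'x::metric_space \<Rightarrow> 'x) \<Rightarrow> 'x rpath set \<Rightarrow> 'g \<Rightarrow> bool" where
  "constricting_element G \<phi> \<Gamma> g \<longleftrightarrow> g \<in> carrier G \<and> infinite_order G g \<and>
     (\<exists>\<delta>\<ge>0. \<exists>A.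
        (\<forall>k\<in>generate G {g}. \<phi> k ` A \<subseteq> A) \<and>
        constricting_set \<Gamma> \<delta> A \<and>
        (\<forall>a\<in>A. \<forall>a'\<in>A. \<exists>k\<in>generate G {g}. dist a (\<phi> k a') \<le> \<delta>))"

definition virtually_cyclic :: "('g, 'm) monoid_scheme \<Rightarrow> bool" where
  "virtually_cyclic G \<longleftrightarrow>
     (\<exists>h\<in>carrier G. finite (rcosets\<^bsub>G\<^esub> (generate G {h})))"

text \<open>Words in the letters a, b and their inverses: a letter is (generator, exponent sign),
  with False = a, True = b, and the sign True = +1, False = -1.\<close>

definition letter_val :: "('g, 'm) monoid_scheme \<Rightarrow> 'g \<Rightarrow> 'g \<Rightarrow> bool \<times> bool \<Rightarrow> 'g" where
  "letter_val G a b l = (let x = (if fst l then b else a) in if snd l then x else inv\<^bsub>G\<^esub> x)"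

fun word_val :: "('g, 'm) monoid_scheme \<Rightarrow> 'g \<Rightarrow> 'g \<Rightarrow> (bool \<times> bool) list \<Rightarrow> 'g" where
  "word_val G a b [] = \<one>\<^bsub>G\<^esub>"
| "word_val G a b (l # w) = letter_val G a b l \<otimes>\<^bsub>G\<^esub> word_val G a b w"

definition reduced_word :: "(bool \<times> bool) list \<Rightarrow> bool" where
  "reduced_word w \<longleftrightarrow> (\<forall>i. Suc i < length w \<longrightarrow>
      \<not> (fst (w ! i) = fst (w ! Suc i) \<and> snd (w ! i) \<noteq> snd (w ! Suc i)))"

definition free_basis2 :: "('g, 'm) monoid_scheme \<Rightarrow> 'g \<Rightarrow> 'g \<Rightarrow> bool" where
  "free_basis2 G a b \<longleftrightarrow> a \<in> carrier G \<and> b \<in> carrier G \<and>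
     (\<forall>w. w \<noteq> [] \<and> reduced_word w \<longrightarrow> word_val G a b w \<noteq> \<one>\<^bsub>G\<^esub>)"

definition has_free_subgroup_rank2 :: "('g, 'm) monoid_scheme \<Rightarrow> bool" where
  "has_free_subgroup_rank2 G \<longleftrightarrow> (\<exists>a b. free_basis2 G a b)"

end

theory Submission
  imports Defs
begin

text \<open>A constricting element \<open>g\<close> comes with a quasi-axis \<open>A\<close> and a projection \<open>\<pi>\<close> onto it that is
  coarsely Lipschitz and coarsely \<open>\<langle>g\<rangle>\<close>-equivariant. For \<open>h \<in> G\<close> compare \<open>A\<close> with \<open>hA\<close>.
  If \<open>\<pi>(hA)\<close> and \<open>\<pi>(h\<inverse>A)\<close> are both bounded, then \<open>A\<close> and \<open>hA\<close> are transverse (no point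
  projects far out onto both), and large powers \<open>g\<^sup>N\<close> and \<open>h g\<^sup>N h\<inverse>\<close> play ping-pong, so they
  freely generate a free group. Otherwise, for every \<open>h\<close>, one of \<open>hA\<close>, \<open>h\<inverse>A\<close> fellow-travels \<open>A\<close>
  along an unbounded stretch. Then \<open>h\<close> commensurates \<open>\<langle>g\<rangle>\<close>, and the double coset \<open>\<langle>g\<rangle>h\<langle>g\<rangle>\<close>
  contains an element moving a base point by a bounded amount; by properness there are only
  finitely many of those, so \<open>\<langle>g\<rangle>\<close> has finite index.\<close>

section \<open>Ping-pong and commensurated cyclic subgroups\<close>

lemma reduced_word_ConsD: "reduced_word (l # w) \<Longrightarrow> reduced_word w"
  unfolding reduced_word_def
proof (intro allI impI)
  fix i
  assume "\<forall>i. Suc i < length (l # w) \<longrightarrow>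
      \<not> (fst ((l # w) ! i) = fst ((l # w) ! Suc i) \<and> snd ((l # w) ! i) \<noteq> snd ((l # w) ! Suc i))"
    and "Suc i < length w"
  then show "\<not> (fst (w ! i) = fst (w ! Suc i) \<and> snd (w ! i) \<noteq> snd (w ! Suc i))"
    by (auto dest: spec[of _ "Suc i"])
qed

lemma reduced_word_Cons_Cons: "reduced_word (l # l' # w) \<Longrightarrow> l' \<noteq> (fst l, \<not> snd l)"
  unfolding reduced_word_def by (drule spec[of _ 0]) auto

lemma (in group) mult_inv_cancel_left: "x \<in> carrier G \<Longrightarrow> y \<in> carrier G \<Longrightarrow> x \<otimes> (inv x \<otimes> y) = y"
  by (simp add: m_assoc[symmetric])

lemma (in group) inv_mult_cancel_left: "x \<in> carrier G \<Longrightarrow> y \<in> carrier G \<Longrightarrow> inv x \<otimes> (x \<otimes> y) = y"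
  by (simp add: m_assoc[symmetric])

lemma (in group) letter_val_closed:
  "a \<in> carrier G \<Longrightarrow> b \<in> carrier G \<Longrightarrow> letter_val G a b l \<in> carrier G"
  unfolding letter_val_def Let_def by auto

lemma (in group) word_val_closed:
  "a \<in> carrier G \<Longrightarrow> b \<in> carrier G \<Longrightarrow> word_val G a b w \<in> carrier G"
  by (induction w) (auto simp: letter_val_closed)

lemma (in group) ping_pong:
  fixes \<phi> :: "'a \<Rightarrow> 'x \<Rightarrow> 'x" and S :: "bool \<times> bool \<Rightarrow> 'x set"
  assumes action_mult: "\<And>g h x. g \<in> carrier G \<Longrightarrow> h \<in> carrier G \<Longrightarrow> \<phi> (g \<otimes> h) x = \<phi> g (\<phi> h x)"
    and action_one: "\<And>x. \<phi> \<one> x = x"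
    and a: "a \<in> carrier G" and b: "b \<in> carrier G"
    and step: "\<And>l x. x \<notin> S (fst l, \<not> snd l) \<Longrightarrow> \<phi> (letter_val G a b l) x \<in> S l"
    and disjoint: "\<And>l l'. l \<noteq> l' \<Longrightarrow> S l \<inter> S l' = {}"
    and base: "\<And>l. p \<notin> S l"
  shows "free_basis2 G a b"
proof -
  have word_region: "\<phi> (word_val G a b w) p \<in> S (hd w)" if "w \<noteq> []" "reduced_word w" for w
    using that
  proof (induction w)
    case Nil
    then show ?case by simp
  next
    case (Cons l w)
    show ?case
    proof (cases w)
      case Nil
      then show ?thesis using step base a b by (simp add: letter_val_closed)
    next
      case (Cons l' w')
      have "\<phi> (word_val G a b w) p \<in> S l'"
        using Cons.IH reduced_word_ConsD[OF Cons.prems(2)] Cons by simp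
      then have "\<phi> (word_val G a b w) p \<notin> S (fst l, \<not> snd l)"
        using disjoint reduced_word_Cons_Cons[OF Cons.prems(2)[unfolded Cons]] by blast
      then show ?thesis
        using step action_mult letter_val_closed word_val_closed a b by simp
    qed
  qed
  show ?thesis
    unfolding free_basis2_def using a b word_region base action_one by metis
qed

lemma (in group) conj_int_pow:
  assumes "f \<in> carrier G" "x \<in> carrier G"
  shows "f \<otimes> x [^] (k::int) \<otimes> inv f = (f \<otimes> x \<otimes> inv f) [^] k"
proof -
  have "(\<lambda>y. f \<otimes> y \<otimes> inv f) \<in> hom G G"
    using assms(1) by (auto simp: hom_def m_assoc inv_mult_cancel_left)
  then show ?thesis
    using hom_int_pow[OF _ assms(2) is_group is_group] by blast
qed

lemma (in group) conj_pow_commute: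
  assumes f: "f \<in> carrier G" and x: "x \<in> carrier G"
    and conj: "f \<otimes> x [^] (m::int) \<otimes> inv f = x [^] (n::int)"
  shows "f \<otimes> x [^] (m * k) = x [^] (n * k) \<otimes> f"
proof -
  have "f \<otimes> x [^] (m * k) \<otimes> inv f = x [^] (n * k)"
    using conj_int_pow[OF f int_pow_closed[OF x], of m k] conj x by (simp add: int_pow_pow)
  then show ?thesis
    using inv_solve_right' f x by simp
qed

text \<open>A double coset \<open>\<langle>x\<rangle> f \<langle>x\<rangle>\<close> with \<open>f x\<^sup>m f\<inverse> \<in> \<langle>x\<rangle>\<close>, \<open>m \<noteq> 0\<close>, is the union of the right
  cosets \<open>\<langle>x\<rangle> f x\<^sup>r\<close> with \<open>0 \<le> r < \<bar>m\<bar>\<close>: reduce the right exponent modulo \<open>m\<close> and move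
  the multiple of \<open>m\<close> across \<open>f\<close>.\<close>

lemma (in group) double_coset_rcoset_rep:
  assumes x: "x \<in> carrier G" and f: "f \<in> carrier G"
    and m: "m \<noteq> 0" and conj: "f \<otimes> x [^] (m::int) \<otimes> inv f = x [^] (n::int)"
  shows "\<exists>r\<in>{0..<\<bar>m\<bar>}.
    generate G {x} #> (x [^] (i::int) \<otimes> f \<otimes> x [^] (j::int)) = generate G {x} #> (f \<otimes> x [^] r)"
proof -
  define H where "H = generate G {x}"
  have H: "subgroup H G"
    unfolding H_def using x by (intro generate_is_subgroup) auto
  define k r where "k = sgn m * (j div \<bar>m\<bar>)" and "r = j mod \<bar>m\<bar>"
  have r: "r \<in> {0..<\<bar>m\<bar>}" unfolding r_def using m by simp
  have "m * k = \<bar>m\<bar> * (j div \<bar>m\<bar>)"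
    unfolding k_def abs_sgn[of m] by (simp only: mult.assoc)
  then have j: "j = m * k + r"
    unfolding r_def by simp
  have "x [^] j = x [^] (m * k) \<otimes> x [^] r"
    by (subst j) (simp add: int_pow_mult x)
  then have "x [^] i \<otimes> f \<otimes> x [^] j = x [^] i \<otimes> ((f \<otimes> x [^] (m * k)) \<otimes> x [^] r)"
    using x f by (simp add: m_assoc)
  also have "f \<otimes> x [^] (m * k) = x [^] (n * k) \<otimes> f"
    using conj_pow_commute[OF f x conj] by blast
  finally have "x [^] i \<otimes> f \<otimes> x [^] j = x [^] (i + n * k) \<otimes> (f \<otimes> x [^] r)"
    using x f by (simp add: m_assoc int_pow_mult)
  then have "H #> (x [^] i \<otimes> f \<otimes> x [^] j) = (H #> x [^] (i + n * k)) #> (f \<otimes> x [^] r)"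
    using coset_mult_assoc[OF subgroup.subset[OF H]] x f by simp
  also have "H #> x [^] (i + n * k) = H"
    using subgroup.rcos_const[OF H is_group] generate_pow[OF x] unfolding H_def by blast
  finally show ?thesis using r unfolding H_def by blast
qed

lemma (in group) finite_rcosets_cyclic:
  assumes x: "x \<in> carrier G" and F: "finite F" "F \<subseteq> carrier G"
    and commensurate: "\<And>f. f \<in> F \<Longrightarrow> \<exists>m n. m \<noteq> 0 \<and> f \<otimes> x [^] (m::int) \<otimes> inv f = x [^] (n::int)"
    and cover: "\<And>a. a \<in> carrier G \<Longrightarrow> \<exists>i j. \<exists>f\<in>F. a = x [^] (i::int) \<otimes> f \<otimes> x [^] (j::int)"
  shows "finite (rcosets (generate G {x}))"
proof -
  define H where "H = generate G {x}"
  have "\<forall>f\<in>F. \<exists>m::int. m \<noteq> 0 \<and> (\<exists>n::int. f \<otimes> x [^] m \<otimes> inv f = x [^] n)"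
    using commensurate by blast
  then obtain m :: "'a \<Rightarrow> int"
    where m: "\<forall>f\<in>F. m f \<noteq> 0 \<and> (\<exists>n::int. f \<otimes> x [^] m f \<otimes> inv f = x [^] n)"
    by (rule bchoice[THEN exE])
  have "rcosets H \<subseteq> (\<lambda>(f, r). H #> (f \<otimes> x [^] r)) ` (SIGMA f:F. {0..<\<bar>m f\<bar>})"
  proof
    fix C assume "C \<in> rcosets H"
    then obtain a where a: "a \<in> carrier G" "C = H #> a"
      unfolding RCOSETS_def by blast
    obtain i j :: int and f where f: "f \<in> F" "a = x [^] i \<otimes> f \<otimes> x [^] j"
      using cover[OF a(1)] by blast
    obtain n :: int where "m f \<noteq> 0" "f \<otimes> x [^] m f \<otimes> inv f = x [^] n"
      using m f(1) by blast
    then obtain r where "r \<in> {0..<\<bar>m f\<bar>}" "C = H #> (f \<otimes> x [^] r)"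
      using double_coset_rcoset_rep[OF x _ _ _, of f "m f" n i j] f F a(2) unfolding H_def by blast
    then show "C \<in> (\<lambda>(f, r). H #> (f \<otimes> x [^] r)) ` (SIGMA f:F. {0..<\<bar>m f\<bar>})"
      using f(1) by (intro image_eqI[where x = "(f, r)"]) auto
  qed
  moreover have "finite (SIGMA f:F. {0..<\<bar>m f\<bar>})"
    using F by (intro finite_SigmaI) auto
  ultimately show ?thesis
    unfolding H_def[symmetric] by (rule finite_subset[OF _ finite_imageI])
qed

lemma (in group) double_coset_eq_imp_conj:
  assumes "a \<in> carrier G" "a' \<in> carrier G" "b \<in> carrier G" "b' \<in> carrier G" "h \<in> carrier G"
    and "inv a \<otimes> h \<otimes> b = inv a' \<otimes> h \<otimes> b'"
  shows "h \<otimes> (b \<otimes> inv b') \<otimes> inv h = a \<otimes> inv a'"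
proof -
  define k where "k = inv a \<otimes> h \<otimes> b"
  have kG: "k \<in> carrier G" unfolding k_def using assms(1-5) by simp
  have hb: "h \<otimes> b = a \<otimes> k"
    unfolding k_def using assms(1-5) by (simp add: m_assoc mult_inv_cancel_left)
  have hb': "h \<otimes> b' = a' \<otimes> k"
    unfolding k_def assms(6) using assms(1-5) by (simp add: m_assoc mult_inv_cancel_left)
  have "h \<otimes> (b \<otimes> inv b') \<otimes> inv h = (h \<otimes> b) \<otimes> inv (h \<otimes> b')"
    using assms by (simp add: inv_mult_group m_assoc)
  also have "\<dots> = a \<otimes> inv a'"
    unfolding hb hb' using assms kG by (simp add: inv_mult_group m_assoc mult_inv_cancel_left)
  finally show ?thesis .
qed

lemma (in group) letter_val_conj:
  assumes "a \<in> carrier G" "h \<in> carrier G"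
  shows "letter_val G a (h \<otimes> a \<otimes> inv h) l =
    (let c = if snd l then a else inv a in if fst l then h \<otimes> c \<otimes> inv h else c)"
  using assms by (cases l) (auto simp: letter_val_def inv_mult_group m_assoc)

section \<open>Constricting maps in a path system group\<close>

locale path_system_action =
  fixes \<mu> \<nu> :: real and G :: "('g, 'm) monoid_scheme"
    and \<phi> :: "'g \<Rightarrow> 'x::metric_space \<Rightarrow> 'x" and \<Gamma> :: "'x rpath set"
  assumes path_system_group: "path_system_group \<mu> \<nu> G \<phi> \<Gamma>"
begin

sublocale group G
  using path_system_group unfolding path_system_group_def by simp

lemma path_system: "path_system \<mu> \<nu> \<Gamma>"
  using path_system_group unfolding path_system_group_def by simp

lemma isometric_action: "isometric_action G \<phi>"
  using path_system_group unfolding path_system_group_def by simp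

lemma proper_action: "proper_action G \<phi>"
  using path_system_group unfolding path_system_group_def by simp

text \<open>Replacing \<open>\<mu>\<close> by \<open>\<kappa> \<ge> 1\<close> makes the multiplicative constant monotone.\<close>

definition \<kappa> :: real where "\<kappa> = max \<mu> 1"

lemma kappa_ge_1: "1 \<le> \<kappa>"
  unfolding \<kappa>_def by simp

lemma kappa_mono: "x \<le> y \<Longrightarrow> \<kappa> * x \<le> \<kappa> * y"
  using kappa_ge_1 by (intro mult_left_mono) auto

lemma kappa_nonneg: "0 \<le> y \<Longrightarrow> 0 \<le> \<kappa> * y"
  using kappa_ge_1 by simp

lemma path_dom_le: "(a, b, \<alpha>) \<in> \<Gamma> \<Longrightarrow> a \<le> b"
  using path_system unfolding path_system_def is_path_def by fastforce

lemma joining_path: "\<exists>a b \<alpha>. (a, b, \<alpha>) \<in> \<Gamma> \<and> a \<le> b \<and> \<alpha> a = x \<and> \<alpha> b = y"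
proof -
  obtain \<gamma> where "\<gamma> \<in> \<Gamma>" "joins \<gamma> x y"
    using path_system unfolding path_system_def by blast
  moreover obtain a b \<alpha> where "\<gamma> = (a, b, \<alpha>)"
    by (cases \<gamma>) auto
  ultimately show ?thesis
    using path_dom_le unfolding joins_def by blast
qed

lemma subpath_in_system:
  assumes "(a, b, \<alpha>) \<in> \<Gamma>" "a \<le> s" "s \<le> t" "t \<le> b"
  shows "\<exists>\<beta>. (s, t, \<beta>) \<in> \<Gamma> \<and> (\<forall>u\<in>{s..t}. \<beta> u = \<alpha> u)"
proof -
  have "in_paths \<Gamma> (s, t, \<alpha>)"
    using path_system assms unfolding path_system_def by blast
  then show ?thesis unfolding in_paths_def by auto
qed

lemma translated_path_in_system:
  assumes "h \<in> carrier G" "(a, b, \<alpha>) \<in> \<Gamma>"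
  shows "\<exists>\<beta>. (a, b, \<beta>) \<in> \<Gamma> \<and> (\<forall>t\<in>{a..b}. \<beta> t = \<phi> h (\<alpha> t))"
proof -
  have "in_paths \<Gamma> (a, b, \<phi> h \<circ> \<alpha>)"
    using path_system_group assms unfolding path_system_group_def by blast
  then show ?thesis unfolding in_paths_def by auto
qed

lemma quasi_geodesic_bounds:
  assumes "(a, b, \<alpha>) \<in> \<Gamma>" "t \<in> {a..b}" "t' \<in> {a..b}"
  shows "dist (\<alpha> t) (\<alpha> t') \<le> \<bar>t - t'\<bar>" and "\<bar>t - t'\<bar> \<le> \<kappa> * dist (\<alpha> t) (\<alpha> t') + \<nu>"
proof -
  have "quasi_geodesic \<mu> \<nu> (a, b, \<alpha>)"
    using path_system assms(1) unfolding path_system_def by blast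
  then have "dist (\<alpha> t) (\<alpha> t') \<le> \<bar>t - t'\<bar> \<and> \<bar>t - t'\<bar> \<le> \<mu> * dist (\<alpha> t) (\<alpha> t') + \<nu>"
    using assms(2,3) unfolding quasi_geodesic_def by simp
  moreover have "\<mu> * dist (\<alpha> t) (\<alpha> t') \<le> \<kappa> * dist (\<alpha> t) (\<alpha> t')"
    unfolding \<kappa>_def by (intro mult_right_mono) auto
  ultimately show "dist (\<alpha> t) (\<alpha> t') \<le> \<bar>t - t'\<bar>" "\<bar>t - t'\<bar> \<le> \<kappa> * dist (\<alpha> t) (\<alpha> t') + \<nu>"
    by linarith+
qed

lemma nu_nonneg: "0 \<le> \<nu>"
proof -
  obtain a b \<alpha> where "(a, b, \<alpha>) \<in> \<Gamma>" "a \<le> b"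
    using joining_path by blast
  then show ?thesis using quasi_geodesic_bounds(2)[of a b \<alpha> a a] by simp
qed

lemma quasi_geodesic_detour:
  assumes "(a, b, \<alpha>) \<in> \<Gamma>" "a \<le> t1" "t1 \<le> s" "s \<le> t2" "t2 \<le> b"
  shows "dist (\<alpha> t1) (\<alpha> s) + dist (\<alpha> s) (\<alpha> t2) \<le> \<kappa> * dist (\<alpha> t1) (\<alpha> t2) + \<nu>"
  using quasi_geodesic_bounds[OF assms(1), of t1 s] quasi_geodesic_bounds[OF assms(1), of s t2]
    quasi_geodesic_bounds[OF assms(1), of t1 t2] assms
  by auto

lemma constricting_map_in: "constricting_map \<Gamma> \<delta> B \<pi> \<Longrightarrow> \<pi> x \<in> B"
  unfolding constricting_map_def by blast

lemma constricting_map_near: "constricting_map \<Gamma> \<delta> B \<pi> \<Longrightarrow> x \<in> B \<Longrightarrow> dist x (\<pi> x) \<le> \<delta>"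
  unfolding constricting_map_def by blast

lemma constricting_map_passes:
  assumes cm: "constricting_map \<Gamma> \<delta> B \<pi>" and p: "(a, b, \<alpha>) \<in> \<Gamma>"
    and st: "a \<le> s" "s \<le> t" "t \<le> b" and far: "\<delta> < dist (\<pi> (\<alpha> s)) (\<pi> (\<alpha> t))"
  shows "\<exists>u\<in>{s..t}. dist (\<alpha> u) (\<pi> (\<alpha> s)) \<le> \<delta>"
    and "\<exists>u\<in>{s..t}. dist (\<alpha> u) (\<pi> (\<alpha> t)) \<le> \<delta>"
proof -
  obtain \<beta> where \<beta>: "(s, t, \<beta>) \<in> \<Gamma>" "\<forall>u\<in>{s..t}. \<beta> u = \<alpha> u"
    using subpath_in_system[OF p st] by blast
  have "joins (s, t, \<beta>) (\<alpha> s) (\<alpha> t)"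
    using \<beta>(2) st unfolding joins_def by auto
  then have "(\<exists>u\<in>{s..t}. \<beta> u \<in> cball (\<pi> (\<alpha> s)) \<delta>) \<and> (\<exists>u\<in>{s..t}. \<beta> u \<in> cball (\<pi> (\<alpha> t)) \<delta>)"
    using cm \<beta>(1) far unfolding constricting_map_def by blast
  then show "\<exists>u\<in>{s..t}. dist (\<alpha> u) (\<pi> (\<alpha> s)) \<le> \<delta>" "\<exists>u\<in>{s..t}. dist (\<alpha> u) (\<pi> (\<alpha> t)) \<le> \<delta>"
    using \<beta>(2) by (auto simp: dist_commute)
qed

lemma constricting_map_coarse_lipschitz:
  assumes cm: "constricting_map \<Gamma> \<delta> B \<pi>" and "0 \<le> \<delta>"
  shows "dist (\<pi> x) (\<pi> y) \<le> \<kappa> * dist x y + \<nu> + 2 * \<delta>"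
proof (cases "\<delta> < dist (\<pi> x) (\<pi> y)")
  case False
  then show ?thesis using kappa_nonneg[of "dist x y"] nu_nonneg \<open>0 \<le> \<delta>\<close> by simp
next
  case True
  obtain a b \<alpha> where p: "(a, b, \<alpha>) \<in> \<Gamma>" "a \<le> b" "\<alpha> a = x" "\<alpha> b = y"
    using joining_path by blast
  obtain u1 u2 where u: "u1 \<in> {a..b}" "u2 \<in> {a..b}"
    "dist (\<alpha> u1) (\<pi> x) \<le> \<delta>" "dist (\<alpha> u2) (\<pi> y) \<le> \<delta>"
    using constricting_map_passes[OF cm p(1) order_refl p(2) order_refl] True p(3,4) by auto
  have "dist (\<alpha> u1) (\<alpha> u2) \<le> b - a"
    using quasi_geodesic_bounds(1)[OF p(1) u(1,2)] u(1,2) by auto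
  moreover have "b - a \<le> \<kappa> * dist x y + \<nu>"
    using quasi_geodesic_bounds(2)[OF p(1), of a b] p by auto
  moreover have "dist (\<pi> x) (\<pi> y) \<le> dist (\<alpha> u1) (\<pi> x) + dist (\<alpha> u1) (\<alpha> u2) + dist (\<alpha> u2) (\<pi> y)"
    by (metis dist_commute dist_triangle dist_triangle_le add_right_mono)
  ultimately show ?thesis using u(3,4) by linarith
qed

lemma action_one: "\<phi> \<one>\<^bsub>G\<^esub> x = x"
  using isometric_action unfolding isometric_action_def by simp

lemma action_mult: "g \<in> carrier G \<Longrightarrow> h \<in> carrier G \<Longrightarrow> \<phi> (g \<otimes>\<^bsub>G\<^esub> h) x = \<phi> g (\<phi> h x)"
  using isometric_action unfolding isometric_action_def by simp

lemma action_dist: "g \<in> carrier G \<Longrightarrow> dist (\<phi> g x) (\<phi> g y) = dist x y"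
  using isometric_action unfolding isometric_action_def by simp

lemma action_inv_left: "g \<in> carrier G \<Longrightarrow> \<phi> (inv\<^bsub>G\<^esub> g) (\<phi> g x) = x"
  by (metis action_mult action_one inv_closed l_inv)

lemma action_inv_right: "g \<in> carrier G \<Longrightarrow> \<phi> g (\<phi> (inv\<^bsub>G\<^esub> g) x) = x"
  by (metis action_mult action_one inv_closed r_inv)

lemma action_dist_inv: "g \<in> carrier G \<Longrightarrow> dist (\<phi> g x) y = dist x (\<phi> (inv\<^bsub>G\<^esub> g) y)"
  by (metis action_dist action_inv_right)

lemma constricting_map_translate:
  assumes cm: "constricting_map \<Gamma> \<delta> B \<pi>" and h: "h \<in> carrier G"
  shows "constricting_map \<Gamma> \<delta> (\<phi> h ` B) (\<lambda>x. \<phi> h (\<pi> (\<phi> (inv\<^bsub>G\<^esub> h) x)))"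
  unfolding constricting_map_def
proof (intro conjI allI ballI impI)
  fix x
  show "\<phi> h (\<pi> (\<phi> (inv\<^bsub>G\<^esub> h) x)) \<in> \<phi> h ` B"
    using constricting_map_in[OF cm] by blast
next
  fix x assume "x \<in> \<phi> h ` B"
  then show "dist x (\<phi> h (\<pi> (\<phi> (inv\<^bsub>G\<^esub> h) x))) \<le> \<delta>"
    using action_inv_left[OF h] action_dist[OF h] constricting_map_near[OF cm] by auto
next
  fix x y a b \<alpha>
  let ?h' = "inv\<^bsub>G\<^esub> h"
  assume H: "(a, b, \<alpha>) \<in> \<Gamma> \<and> joins (a, b, \<alpha>) x y \<and>
    \<delta> < dist (\<phi> h (\<pi> (\<phi> ?h' x))) (\<phi> h (\<pi> (\<phi> ?h' y)))"
  obtain \<beta> where \<beta>: "(a, b, \<beta>) \<in> \<Gamma>" "\<forall>t\<in>{a..b}. \<beta> t = \<phi> ?h' (\<alpha> t)"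
    using translated_path_in_system[OF inv_closed[OF h]] H by blast
  have "joins (a, b, \<beta>) (\<phi> ?h' x) (\<phi> ?h' y)"
    using H \<beta>(2) path_dom_le[OF \<beta>(1)] unfolding joins_def by auto
  moreover have "\<delta> < dist (\<pi> (\<phi> ?h' x)) (\<pi> (\<phi> ?h' y))"
    using H action_dist[OF h] by simp
  ultimately have "(\<exists>t\<in>{a..b}. \<beta> t \<in> cball (\<pi> (\<phi> ?h' x)) \<delta>) \<and> (\<exists>t\<in>{a..b}. \<beta> t \<in> cball (\<pi> (\<phi> ?h' y)) \<delta>)"
    using cm \<beta>(1) unfolding constricting_map_def by blast
  then show "\<exists>t\<in>{a..b}. \<alpha> t \<in> cball (\<phi> h (\<pi> (\<phi> ?h' x))) \<delta>"
    and "\<exists>t\<in>{a..b}. \<alpha> t \<in> cball (\<phi> h (\<pi> (\<phi> ?h' y))) \<delta>"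
    using \<beta>(2) action_dist_inv[OF h] by (auto simp: mem_cball)
qed

definition close_bound :: "real \<Rightarrow> real" where
  "close_bound \<delta> = \<kappa> * \<delta> + \<nu> + 4 * \<delta>"

lemma close_bound_ge: "0 \<le> \<delta> \<Longrightarrow> \<delta> \<le> close_bound \<delta>"
  unfolding close_bound_def using kappa_nonneg[of \<delta>] nu_nonneg by simp

text \<open>Follow a path from \<open>x\<close> to \<open>\<pi>\<^sub>2 x\<close>: it meets the \<open>\<delta>\<close>-ball around \<open>\<pi>\<^sub>1 x\<close> first and then
  the one around \<open>\<pi>\<^sub>2 x\<close>, so it backtracks unless the two points are close.\<close>

lemma constricting_maps_close:
  assumes c1: "constricting_map \<Gamma> \<delta> B \<pi>1" and c2: "constricting_map \<Gamma> \<delta> B \<pi>2" and d: "0 \<le> \<delta>"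
  shows "dist (\<pi>1 x) (\<pi>2 x) \<le> close_bound \<delta>"
proof (rule ccontr)
  define D where "D = dist (\<pi>1 x) (\<pi>2 x)"
  assume "\<not> ?thesis"
  then have DD: "\<kappa> * \<delta> + \<nu> + 4 * \<delta> < D" unfolding D_def close_bound_def by simp
  have kd: "0 \<le> \<kappa> * \<delta>" using kappa_nonneg d by simp
  note nu = nu_nonneg
  obtain a b \<alpha> where p: "(a, b, \<alpha>) \<in> \<Gamma>" "a \<le> b" "\<alpha> a = x" "\<alpha> b = \<pi>2 x"
    using joining_path by blast
  have "dist (\<pi>2 x) (\<pi>1 (\<pi>2 x)) \<le> \<delta>"
    using constricting_map_near[OF c1 constricting_map_in[OF c2]] .
  moreover have "D \<le> dist (\<pi>1 x) (\<pi>1 (\<pi>2 x)) + dist (\<pi>1 (\<pi>2 x)) (\<pi>2 x)"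
    unfolding D_def by (rule dist_triangle)
  ultimately have "\<delta> < dist (\<pi>1 (\<alpha> a)) (\<pi>1 (\<alpha> b))"
    using p DD kd nu d by (simp add: dist_commute)
  then obtain u where u: "u \<in> {a..b}" "dist (\<alpha> u) (\<pi>1 x) \<le> \<delta>"
    using constricting_map_passes(1)[OF c1 p(1) order_refl p(2) order_refl] p by auto
  have "dist (\<pi>2 (\<alpha> u)) (\<pi>2 (\<pi>1 x)) \<le> \<kappa> * dist (\<alpha> u) (\<pi>1 x) + \<nu> + 2 * \<delta>"
    by (rule constricting_map_coarse_lipschitz[OF c2 d])
  moreover have "\<kappa> * dist (\<alpha> u) (\<pi>1 x) \<le> \<kappa> * \<delta>" using kappa_mono u(2) by simp
  moreover have "dist (\<pi>1 x) (\<pi>2 (\<pi>1 x)) \<le> \<delta>"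
    using constricting_map_near[OF c2 constricting_map_in[OF c1]] .
  moreover have "dist (\<pi>2 (\<alpha> u)) (\<pi>1 x) \<le> dist (\<pi>2 (\<alpha> u)) (\<pi>2 (\<pi>1 x)) + dist (\<pi>2 (\<pi>1 x)) (\<pi>1 x)"
    by (rule dist_triangle)
  ultimately have m: "dist (\<pi>2 (\<alpha> u)) (\<pi>1 x) \<le> \<kappa> * \<delta> + \<nu> + 3 * \<delta>"
    by (simp add: dist_commute)
  have "D \<le> dist (\<pi>1 x) (\<pi>2 (\<alpha> u)) + dist (\<pi>2 (\<alpha> u)) (\<pi>2 x)"
    unfolding D_def by (rule dist_triangle)
  then have far2: "\<delta> < dist (\<pi>2 (\<alpha> a)) (\<pi>2 (\<alpha> u))"
    using p m DD by (simp add: dist_commute)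
  obtain v where v: "v \<in> {a..u}" "dist (\<alpha> v) (\<pi>2 x) \<le> \<delta>"
    using constricting_map_passes(1)[OF c2 p(1) order_refl _ _ far2] u p by auto
  have "dist (\<alpha> v) (\<alpha> u) + dist (\<alpha> u) (\<alpha> b) \<le> \<kappa> * dist (\<alpha> v) (\<alpha> b) + \<nu>"
    using quasi_geodesic_detour[OF p(1), of v u b] v u by auto
  moreover have "\<kappa> * dist (\<alpha> v) (\<alpha> b) \<le> \<kappa> * \<delta>" using kappa_mono v(2) p(4) by simp
  moreover have "D \<le> dist (\<pi>1 x) (\<alpha> u) + dist (\<alpha> u) (\<alpha> v) + dist (\<alpha> v) (\<pi>2 x)"
    unfolding D_def
    using dist_triangle[of "\<pi>1 x" "\<pi>2 x" "\<alpha> v"] dist_triangle[of "\<pi>1 x" "\<alpha> v" "\<alpha> u"] by linarith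
  moreover have "D \<le> dist (\<pi>1 x) (\<alpha> u) + dist (\<alpha> u) (\<alpha> b)"
    unfolding D_def using dist_triangle[of "\<pi>1 x" "\<pi>2 x" "\<alpha> u"] p(4) by simp
  ultimately show False using u(2) v(2) DD kd nu d by (simp add: dist_commute)
qed

definition transverse_bound :: "real \<Rightarrow> real" where
  "transverse_bound \<delta> = \<kappa> * (\<kappa> * \<delta> + \<nu> + 3 * \<delta>) + \<kappa> * \<delta> + 2 * \<nu> + 4 * \<delta>"

lemma transverse_bound_ge: "0 \<le> \<delta> \<Longrightarrow> \<delta> \<le> transverse_bound \<delta>"
  unfolding transverse_bound_def
  using kappa_nonneg[of \<delta>] kappa_nonneg[of "\<kappa> * \<delta> + \<nu> + 3 * \<delta>"] nu_nonneg by simp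

text \<open>If each of two constricting sets projects to a bounded set in the other, then no point
  projects far out on both: a path from \<open>x\<close> to \<open>\<pi>\<^sub>1 x\<close> would have to pass near \<open>\<pi>\<^sub>2 x\<close>
  and come back, forcing \<open>\<pi>\<^sub>1 x\<close> and \<open>\<pi>\<^sub>2 x\<close> together.\<close>

lemma constricting_maps_transverse:
  assumes c1: "constricting_map \<Gamma> \<delta> B1 \<pi>1" and c2: "constricting_map \<Gamma> \<delta> B2 \<pi>2" and d: "0 \<le> \<delta>"
    and b1: "\<forall>b\<in>B2. dist (\<pi>1 b) c1 \<le> R" and b2: "\<forall>b\<in>B1. dist (\<pi>2 b) c2 \<le> R"
  shows "dist (\<pi>1 x) c1 \<le> R + transverse_bound \<delta> \<or> dist (\<pi>2 x) c2 \<le> R + transverse_bound \<delta>"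
proof (rule ccontr)
  define p q where "p = \<pi>1 x" and "q = \<pi>2 x"
  assume "\<not> ?thesis"
  then have fp: "R + transverse_bound \<delta> < dist p c1" and fq: "R + transverse_bound \<delta> < dist q c2"
    unfolding p_def q_def by auto
  have kd: "0 \<le> \<kappa> * \<delta>" using kappa_nonneg d by simp
  have kk: "0 \<le> \<kappa> * (\<kappa> * \<delta> + \<nu> + 3 * \<delta>)" using kappa_nonneg d kd nu_nonneg by simp
  note nu = nu_nonneg
  have pB: "p \<in> B1" and qB: "q \<in> B2"
    unfolding p_def q_def by (rule constricting_map_in[OF c1], rule constricting_map_in[OF c2])
  obtain a b \<alpha> where P: "(a, b, \<alpha>) \<in> \<Gamma>" "a \<le> b" "\<alpha> a = x" "\<alpha> b = p"
    using joining_path by blast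
  have "dist q c2 \<le> dist q (\<pi>2 p) + dist (\<pi>2 p) c2" by (rule dist_triangle)
  then have "\<delta> < dist (\<pi>2 (\<alpha> a)) (\<pi>2 (\<alpha> b))"
    using b2 pB fq P kd kk nu d unfolding transverse_bound_def q_def by fastforce
  then obtain s where s: "s \<in> {a..b}" "dist (\<alpha> s) q \<le> \<delta>"
    using constricting_map_passes(1)[OF c2 P(1) order_refl P(2) order_refl] P unfolding q_def by auto
  have "dist (\<pi>1 (\<alpha> s)) (\<pi>1 q) \<le> \<kappa> * dist (\<alpha> s) q + \<nu> + 2 * \<delta>"
    by (rule constricting_map_coarse_lipschitz[OF c1 d])
  moreover have "\<kappa> * dist (\<alpha> s) q \<le> \<kappa> * \<delta>" using kappa_mono s(2) by simp
  moreover have "dist (\<pi>1 (\<alpha> s)) c1 \<le> dist (\<pi>1 (\<alpha> s)) (\<pi>1 q) + dist (\<pi>1 q) c1" by (rule dist_triangle)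
  ultimately have "dist (\<pi>1 (\<alpha> s)) c1 \<le> R + \<kappa> * \<delta> + \<nu> + 2 * \<delta>" using b1 qB by fastforce
  moreover have "dist p c1 \<le> dist p (\<pi>1 (\<alpha> s)) + dist (\<pi>1 (\<alpha> s)) c1" by (rule dist_triangle)
  ultimately have far1: "\<delta> < dist (\<pi>1 (\<alpha> a)) (\<pi>1 (\<alpha> s))"
    using fp P kk nu d unfolding transverse_bound_def p_def by simp
  obtain u where u: "u \<in> {a..s}" "dist (\<alpha> u) p \<le> \<delta>"
    using constricting_map_passes(1)[OF c1 P(1) order_refl _ _ far1] s P unfolding p_def by auto
  have "dist (\<alpha> u) (\<alpha> s) + dist (\<alpha> s) (\<alpha> b) \<le> \<kappa> * dist (\<alpha> u) (\<alpha> b) + \<nu>"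
    using quasi_geodesic_detour[OF P(1), of u s b] u s by auto
  moreover have "\<kappa> * dist (\<alpha> u) (\<alpha> b) \<le> \<kappa> * \<delta>" using kappa_mono u(2) P(4) by simp
  moreover have "dist p q \<le> dist p (\<alpha> u) + dist (\<alpha> u) (\<alpha> s) + dist (\<alpha> s) q"
    using dist_triangle[of p q "\<alpha> s"] dist_triangle[of p "\<alpha> s" "\<alpha> u"] by linarith
  moreover have "dist p q \<le> dist p (\<alpha> s) + dist (\<alpha> s) q" by (rule dist_triangle)
  ultimately have pq: "dist p q \<le> \<kappa> * \<delta> + \<nu> + 3 * \<delta>"
    using u(2) s(2) P(4) d nu kd by (simp add: dist_commute)
  have "dist (\<pi>1 q) (\<pi>1 p) \<le> \<kappa> * dist q p + \<nu> + 2 * \<delta>"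
    by (rule constricting_map_coarse_lipschitz[OF c1 d])
  moreover have "\<kappa> * dist q p \<le> \<kappa> * (\<kappa> * \<delta> + \<nu> + 3 * \<delta>)" using kappa_mono pq by (simp add: dist_commute)
  moreover have "dist p (\<pi>1 p) \<le> \<delta>" by (rule constricting_map_near[OF c1 pB])
  moreover have "dist p c1 \<le> dist p (\<pi>1 p) + dist (\<pi>1 p) (\<pi>1 q) + dist (\<pi>1 q) c1"
    using dist_triangle[of p c1 "\<pi>1 q"] dist_triangle[of p "\<pi>1 q" "\<pi>1 p"] by linarith
  ultimately show False
    using fp b1 qB kd nu d unfolding transverse_bound_def by (fastforce simp: dist_commute)
qed

lemma constricting_map_path_point_near:
  assumes cm: "constricting_map \<Gamma> \<delta> B \<pi>" and p: "(a, b, \<alpha>) \<in> \<Gamma>" "a \<le> t" "t \<le> b"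
    and far: "\<delta> < dist (\<pi> (\<alpha> a)) (\<pi> (\<alpha> t))" "\<delta> < dist (\<pi> (\<alpha> t)) (\<pi> (\<alpha> b))"
  shows "2 * dist (\<alpha> t) (\<pi> (\<alpha> t)) \<le> 2 * (\<kappa> * \<delta>) + \<nu> + 2 * \<delta>"
proof -
  obtain s where s: "s \<in> {a..t}" "dist (\<alpha> s) (\<pi> (\<alpha> t)) \<le> \<delta>"
    using constricting_map_passes(2)[OF cm p(1) order_refl p(2,3) far(1)] by blast
  obtain s' where s': "s' \<in> {t..b}" "dist (\<alpha> s') (\<pi> (\<alpha> t)) \<le> \<delta>"
    using constricting_map_passes(1)[OF cm p(1) p(2,3) order_refl far(2)] by blast
  have "dist (\<alpha> s) (\<alpha> t) + dist (\<alpha> t) (\<alpha> s') \<le> \<kappa> * dist (\<alpha> s) (\<alpha> s') + \<nu>"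
    using quasi_geodesic_detour[OF p(1), of s t s'] s s' p by auto
  moreover have "dist (\<alpha> s) (\<alpha> s') \<le> 2 * \<delta>"
    using dist_triangle[of "\<alpha> s" "\<alpha> s'" "\<pi> (\<alpha> t)"] s(2) s'(2) by (simp add: dist_commute)
  then have "\<kappa> * dist (\<alpha> s) (\<alpha> s') \<le> 2 * (\<kappa> * \<delta>)" using kappa_mono by fastforce
  moreover have "dist (\<alpha> t) (\<pi> (\<alpha> t)) \<le> dist (\<alpha> t) (\<alpha> s) + dist (\<alpha> s) (\<pi> (\<alpha> t))"
    and "dist (\<alpha> t) (\<pi> (\<alpha> t)) \<le> dist (\<alpha> t) (\<alpha> s') + dist (\<alpha> s') (\<pi> (\<alpha> t))"
    by (rule dist_triangle)+
  ultimately show ?thesis using s(2) s'(2) by (simp add: dist_commute)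
qed

definition fellow_far_bound :: "real \<Rightarrow> real" where
  "fellow_far_bound \<delta> = \<kappa> * (close_bound \<delta> + 2 * \<delta>) + \<nu> + 2 * \<delta> +
     (\<kappa> * (\<delta> + close_bound \<delta>) + \<nu> + 2 * \<delta>) + \<delta>"

definition fellow_near_bound :: "real \<Rightarrow> real" where
  "fellow_near_bound \<delta> = \<kappa> * (\<delta> + (\<kappa> * (\<delta> + close_bound \<delta>) + \<nu> + 2 * \<delta>)) + 2 * \<nu> + 3 * \<delta> +
     close_bound \<delta> + \<kappa> * \<delta>"

lemma fellow_bounds:
  assumes "0 \<le> \<delta>"
  shows "0 \<le> \<kappa> * (close_bound \<delta> + 2 * \<delta>)" "0 \<le> \<kappa> * (\<delta> + close_bound \<delta>) + \<nu> + 2 * \<delta>"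
    "0 \<le> fellow_far_bound \<delta>" "close_bound \<delta> \<le> fellow_near_bound \<delta>"
  using assms close_bound_ge[OF assms] nu_nonneg kappa_nonneg[of "close_bound \<delta> + 2 * \<delta>"]
    kappa_nonneg[of "\<delta> + close_bound \<delta>"] kappa_nonneg[of \<delta>]
    kappa_nonneg[of "\<delta> + (\<kappa> * (\<delta> + close_bound \<delta>) + \<nu> + 2 * \<delta>)"]
  unfolding fellow_far_bound_def fellow_near_bound_def by simp_all

lemma large_projection_near_first:
  assumes cP: "constricting_map \<Gamma> \<delta> B1 P" and cQ: "constricting_map \<Gamma> \<delta> B2 Q" and d: "0 \<le> \<delta>"
    and y2: "y2 \<in> B2" and Qp: "dist (Q (P y1)) y1 \<le> close_bound \<delta>"
    and yy: "close_bound \<delta> + 2 * \<delta> < dist y1 y2" and far: "fellow_far_bound \<delta> < dist (P y1) (P y2)"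
  shows "dist (P y1) y1 \<le> fellow_near_bound \<delta>"
proof -
  define p1 E1 E2 where "p1 = P y1" and "E1 = close_bound \<delta>"
    and "E2 = \<kappa> * (\<delta> + close_bound \<delta>) + \<nu> + 2 * \<delta>"
  have "dist y1 y2 \<le> dist y1 (Q p1) + dist (Q p1) (Q y2) + dist (Q y2) y2"
    using dist_triangle[of y1 y2 "Q y2"] dist_triangle[of y1 "Q y2" "Q p1"] by linarith
  then have farQ: "\<delta> < dist (Q p1) (Q y2)"
    using yy Qp constricting_map_near[OF cQ y2] unfolding p1_def by (simp add: dist_commute)
  obtain a b \<beta> where S: "(a, b, \<beta>) \<in> \<Gamma>" "a \<le> b" "\<beta> a = p1" "\<beta> b = y2"
    using joining_path by blast
  obtain s where s: "s \<in> {a..b}" "dist (\<beta> s) (Q p1) \<le> \<delta>"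
    using constricting_map_passes(1)[OF cQ S(1) order_refl S(2) order_refl] farQ S by auto
  define w where "w = \<beta> s"
  have wy: "dist w y1 \<le> \<delta> + E1"
    using dist_triangle[of w y1 "Q p1"] s(2) Qp unfolding w_def E1_def p1_def by simp
  have "dist (P w) (P y1) \<le> \<kappa> * dist w y1 + \<nu> + 2 * \<delta>"
    by (rule constricting_map_coarse_lipschitz[OF cP d])
  then have pw: "dist (P w) p1 \<le> E2"
    using kappa_mono[OF wy] unfolding E2_def E1_def p1_def by simp
  have "dist p1 (P y2) \<le> dist p1 (P w) + dist (P w) (P y2)" by (rule dist_triangle)
  then have farP: "\<delta> < dist (P (\<beta> s)) (P (\<beta> b))"
    using far pw S fellow_bounds(1)[OF d] nu_nonneg d
    unfolding fellow_far_bound_def E2_def w_def p1_def by (simp add: dist_commute)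
  obtain s' where s': "s' \<in> {s..b}" "dist (\<beta> s') (P w) \<le> \<delta>"
    using constricting_map_passes(1)[OF cP S(1) _ _ order_refl farP] s unfolding w_def by auto
  have "dist (\<beta> a) (\<beta> s) + dist (\<beta> s) (\<beta> s') \<le> \<kappa> * dist (\<beta> a) (\<beta> s') + \<nu>"
    using quasi_geodesic_detour[OF S(1), of a s s'] s s' by auto
  moreover have "dist p1 (\<beta> s') \<le> \<delta> + E2"
    using dist_triangle[of p1 "\<beta> s'" "P w"] s'(2) pw by (simp add: dist_commute)
  ultimately have "dist p1 w \<le> \<kappa> * (\<delta> + E2) + \<nu>"
    using kappa_mono[of "dist p1 (\<beta> s')" "\<delta> + E2"] zero_le_dist[of w "\<beta> s'"]
    unfolding S(3) w_def by linarith
  then show ?thesis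
    using dist_triangle[of p1 y1 w] wy kappa_nonneg[of \<delta>] nu_nonneg d
    unfolding fellow_near_bound_def E1_def E2_def p1_def by simp
qed

lemma large_projection_near_second:
  assumes cP: "constricting_map \<Gamma> \<delta> B1 P" and cQ: "constricting_map \<Gamma> \<delta> B2 Q" and d: "0 \<le> \<delta>"
    and y1: "y1 \<in> B2" and Qp: "dist (Q (P y1)) y2 \<le> close_bound \<delta>"
    and yy: "close_bound \<delta> + 2 * \<delta> < dist y1 y2" and far: "fellow_far_bound \<delta> < dist (P y1) (P y2)"
  shows "dist (P y1) y2 \<le> fellow_near_bound \<delta>"
proof -
  define p1 E1 E2 where "p1 = P y1" and "E1 = close_bound \<delta>"
    and "E2 = \<kappa> * (\<delta> + close_bound \<delta>) + \<nu> + 2 * \<delta>"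
  have "dist y2 y1 \<le> dist y2 (Q p1) + dist (Q p1) (Q y1) + dist (Q y1) y1"
    using dist_triangle[of y2 y1 "Q y1"] dist_triangle[of y2 "Q y1" "Q p1"] by linarith
  then have farQ: "\<delta> < dist (Q p1) (Q y1)"
    using yy Qp constricting_map_near[OF cQ y1] unfolding p1_def by (simp add: dist_commute)
  obtain a b \<beta> where S: "(a, b, \<beta>) \<in> \<Gamma>" "a \<le> b" "\<beta> a = p1" "\<beta> b = y1"
    using joining_path by blast
  obtain s where s: "s \<in> {a..b}" "dist (\<beta> s) (Q p1) \<le> \<delta>"
    using constricting_map_passes(1)[OF cQ S(1) order_refl S(2) order_refl] farQ S by auto
  define w where "w = \<beta> s"
  have wy: "dist w y2 \<le> \<delta> + E1"
    using dist_triangle[of w y2 "Q p1"] s(2) Qp unfolding w_def E1_def p1_def by simp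
  have "dist (P w) (P y2) \<le> \<kappa> * dist w y2 + \<nu> + 2 * \<delta>"
    by (rule constricting_map_coarse_lipschitz[OF cP d])
  then have pw: "dist (P w) (P y2) \<le> E2"
    using kappa_mono[OF wy] unfolding E2_def E1_def by simp
  have "dist p1 (P y2) \<le> dist p1 (P w) + dist (P w) (P y2)" by (rule dist_triangle)
  then have farP: "\<delta> < dist (P (\<beta> s)) (P (\<beta> b))"
    using far pw S fellow_bounds(1)[OF d] nu_nonneg d
    unfolding fellow_far_bound_def E2_def w_def p1_def by (simp add: dist_commute)
  obtain u where u: "u \<in> {s..b}" "dist (\<beta> u) p1 \<le> \<delta>"
    using constricting_map_passes(2)[OF cP S(1) _ _ order_refl farP] s S unfolding p1_def by auto
  have "dist (\<beta> a) (\<beta> s) + dist (\<beta> s) (\<beta> u) \<le> \<kappa> * dist (\<beta> a) (\<beta> u) + \<nu>"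
    using quasi_geodesic_detour[OF S(1), of a s u] s u by auto
  moreover have "\<kappa> * dist p1 (\<beta> u) \<le> \<kappa> * \<delta>"
    using kappa_mono u(2) by (simp add: dist_commute)
  ultimately have "dist p1 w \<le> \<kappa> * \<delta> + \<nu>"
    using zero_le_dist[of "\<beta> s" "\<beta> u"] unfolding S(3) w_def by linarith
  then show ?thesis
    using dist_triangle[of p1 y2 w] wy fellow_bounds(2)[OF d] kappa_nonneg[of "\<delta> + E2"] nu_nonneg d
    unfolding fellow_near_bound_def E1_def E2_def p1_def by simp
qed

text \<open>A constricting set \<open>B\<^sub>2\<close> whose projection to another constricting set has large
  diameter comes close to it: a path between two points of \<open>B\<^sub>2\<close> with distant projections
  passes near the first projection \<open>P y\<^sub>1\<close>.\<close>

lemma constricting_map_large_projection: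
  assumes cP: "constricting_map \<Gamma> \<delta> B1 P" and cQ: "constricting_map \<Gamma> \<delta> B2 Q" and d: "0 \<le> \<delta>"
    and y1: "y1 \<in> B2" and y2: "y2 \<in> B2" and far: "fellow_far_bound \<delta> < dist (P y1) (P y2)"
  shows "\<exists>b\<in>B2. dist (P y1) b \<le> fellow_near_bound \<delta>"
proof -
  define p1 where "p1 = P y1"
  have "dist (P y1) (P y2) \<le> \<kappa> * dist y1 y2 + \<nu> + 2 * \<delta>"
    by (rule constricting_map_coarse_lipschitz[OF cP d])
  then have "\<kappa> * (close_bound \<delta> + 2 * \<delta>) < \<kappa> * dist y1 y2"
    using far fellow_bounds(2)[OF d] d unfolding fellow_far_bound_def by simp
  then have yy: "close_bound \<delta> + 2 * \<delta> < dist y1 y2"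
    using kappa_ge_1 by (simp add: mult_less_cancel_left_pos)
  obtain a b \<alpha> where p: "(a, b, \<alpha>) \<in> \<Gamma>" "a \<le> b" "\<alpha> a = y1" "\<alpha> b = y2"
    using joining_path by blast
  have "\<delta> < dist (P (\<alpha> a)) (P (\<alpha> b))"
    using p far fellow_bounds(1,2)[OF d] nu_nonneg d unfolding fellow_far_bound_def by simp
  then obtain t where t: "t \<in> {a..b}" "dist (\<alpha> t) p1 \<le> \<delta>"
    using constricting_map_passes(1)[OF cP p(1) order_refl p(2) order_refl] p unfolding p1_def by auto
  define z where "z = \<alpha> t"
  have "dist (Q p1) (Q z) \<le> \<kappa> * dist p1 z + \<nu> + 2 * \<delta>"
    by (rule constricting_map_coarse_lipschitz[OF cQ d])
  then have Qz: "dist (Q p1) (Q z) \<le> \<kappa> * \<delta> + \<nu> + 2 * \<delta>"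
    using kappa_mono[of "dist p1 z" \<delta>] t(2) unfolding z_def by (simp add: dist_commute)
  consider "\<delta> < dist (Q y1) (Q z)" "\<delta> < dist (Q z) (Q y2)"
    | "dist (Q y1) (Q z) \<le> \<delta>" | "dist (Q z) (Q y2) \<le> \<delta>" by linarith
  then show ?thesis
  proof cases
    case 1
    then have "2 * dist z (Q z) \<le> 2 * (\<kappa> * \<delta>) + \<nu> + 2 * \<delta>"
      using constricting_map_path_point_near[OF cQ p(1)] t p unfolding z_def by auto
    then have "dist p1 (Q z) \<le> close_bound \<delta>"
      using dist_triangle[of p1 "Q z" z] t(2) nu_nonneg d
      unfolding close_bound_def z_def by (simp add: dist_commute)
    then have "dist p1 (Q z) \<le> fellow_near_bound \<delta>"
      using fellow_bounds(4)[OF d] by linarith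
    then show ?thesis using constricting_map_in[OF cQ] unfolding p1_def by blast
  next
    case 2
    then have "dist (Q p1) y1 \<le> close_bound \<delta>"
      using Qz constricting_map_near[OF cQ y1] dist_triangle[of "Q p1" y1 "Q y1"]
        dist_triangle[of "Q p1" "Q y1" "Q z"]
      unfolding close_bound_def by (simp add: dist_commute)
    then show ?thesis
      using large_projection_near_first[OF cP cQ d y2 _ yy far] y1 unfolding p1_def by blast
  next
    case 3
    then have "dist (Q p1) y2 \<le> close_bound \<delta>"
      using Qz constricting_map_near[OF cQ y2] dist_triangle[of "Q p1" y2 "Q y2"]
        dist_triangle[of "Q p1" "Q y2" "Q z"]
      unfolding close_bound_def by (simp add: dist_commute)
    then show ?thesis
      using large_projection_near_second[OF cP cQ d y1 _ yy far] y2 unfolding p1_def by blast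
  qed
qed

end

section \<open>The axis of a constricting element\<close>

locale constricting_axis = path_system_action +
  fixes g and \<delta> :: real and A and \<pi> and x0
  assumes g_carrier: "g \<in> carrier G" and g_infinite_order: "infinite_order G g"
    and delta_nonneg: "0 \<le> \<delta>"
    and A_invariant: "\<forall>k\<in>generate G {g}. \<phi> k ` A \<subseteq> A"
    and constricting: "constricting_map \<Gamma> \<delta> A \<pi>"
    and A_cobounded: "\<forall>a\<in>A. \<forall>a'\<in>A. \<exists>k\<in>generate G {g}. dist a (\<phi> k a') \<le> \<delta>"
    and x0_in_A: "x0 \<in> A"
begin

abbreviation g_pow :: "int \<Rightarrow> _" where "g_pow i \<equiv> g [^]\<^bsub>G\<^esub> i"

lemma generate_g: "generate G {g} = range g_pow"
  using generate_pow[OF g_carrier] by auto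

lemma g_pow_closed [simp]: "g_pow i \<in> carrier G"
  using g_carrier by simp

lemma g_pow_add: "g_pow (i + j) = g_pow i \<otimes>\<^bsub>G\<^esub> g_pow j"
  using g_carrier by (simp add: int_pow_mult)

lemma action_g_pow_add: "\<phi> (g_pow (i + j)) x = \<phi> (g_pow i) (\<phi> (g_pow j) x)"
  by (simp add: g_pow_add action_mult)

lemma g_pow_eq_iff: "g_pow i = g_pow j \<longleftrightarrow> i = j"
proof -
  have "ord g = 0"
    using g_infinite_order g_carrier unfolding infinite_order_def by (auto simp: ord_eq_0)
  then show ?thesis
    using int_pow_eq[OF g_carrier] by auto
qed

lemma A_translate: "\<phi> (g_pow i) ` A = A"
proof
  show "\<phi> (g_pow i) ` A \<subseteq> A"
    using A_invariant generate_g by blast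
  show "A \<subseteq> \<phi> (g_pow i) ` A"
  proof
    fix a assume "a \<in> A"
    then have "\<phi> (g_pow (- i)) a \<in> A"
      using A_invariant generate_g by blast
    moreover have "\<phi> (g_pow i) (\<phi> (g_pow (- i)) a) = a"
      using action_g_pow_add[of i "- i"] action_one by simp
    ultimately show "a \<in> \<phi> (g_pow i) ` A" by (metis image_eqI)
  qed
qed

lemma near_orbit: "a \<in> A \<Longrightarrow> \<exists>i. dist a (\<phi> (g_pow i) x0) \<le> \<delta>"
  using A_cobounded x0_in_A unfolding generate_g by blast

lemma dist_orbit: "dist (\<phi> (g_pow i) x) (\<phi> (g_pow j) x) = dist x (\<phi> (g_pow (j - i)) x)"
  using action_g_pow_add[of i "j - i" x] action_dist[OF g_pow_closed] by simp

text \<open>The translate of \<open>\<pi>\<close> by \<open>g\<^sup>i\<close> is again a constricting map onto \<open>A\<close>, hence close to \<open>\<pi>\<close>.\<close>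

lemma projection_equivariant: "dist (\<pi> (\<phi> (g_pow i) x)) (\<phi> (g_pow i) (\<pi> x)) \<le> close_bound \<delta>"
proof -
  have "constricting_map \<Gamma> \<delta> A (\<lambda>x. \<phi> (g_pow i) (\<pi> (\<phi> (inv\<^bsub>G\<^esub> (g_pow i)) x)))"
    using constricting_map_translate[OF constricting g_pow_closed] A_translate by simp
  from constricting_maps_close[OF constricting this delta_nonneg, of "\<phi> (g_pow i) x"]
  show ?thesis using action_inv_left[OF g_pow_closed] by simp
qed

lemma orbit_displacement_bounded: "\<exists>M. \<forall>i. dist x0 (\<phi> (g_pow i) x0) \<le> r \<longrightarrow> \<bar>i\<bar> < M"
proof -
  define I where "I = {i. dist x0 (\<phi> (g_pow i) x0) \<le> r}"
  have "g_pow ` I \<subseteq> {h \<in> carrier G. dist x0 (\<phi> h x0) \<le> r}"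
    unfolding I_def by auto
  moreover have "finite {h \<in> carrier G. dist x0 (\<phi> h x0) \<le> r}"
    using proper_action unfolding proper_action_def by blast
  moreover have "inj_on g_pow I"
    by (auto simp: inj_on_def g_pow_eq_iff)
  ultimately have "finite I"
    using finite_imageD finite_subset by blast
  then have "finite (abs ` I)" by simp
  then obtain M where M: "\<forall>k\<in>abs ` I. k \<le> M"
    using bdd_above_finite unfolding bdd_above_def by blast
  then have "\<forall>i. dist x0 (\<phi> (g_pow i) x0) \<le> r \<longrightarrow> \<bar>i\<bar> < M + 1"
    unfolding I_def by fastforce
  then show ?thesis by blast
qed
definition bounded_translate :: "_ \<Rightarrow> bool" where
  "bounded_translate h \<longleftrightarrow> (\<exists>R. \<forall>a\<in>A. dist (\<pi> (\<phi> h a)) x0 \<le> R)"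

definition meet_radius :: real where
  "meet_radius = fellow_near_bound \<delta> + 2 * \<delta>"

definition short_elements :: "_ set" where
  "short_elements = {k \<in> carrier G. dist x0 (\<phi> k x0) \<le> meet_radius}"

lemma finite_short_elements: "finite short_elements"
  unfolding short_elements_def using proper_action unfolding proper_action_def by blast

lemma short_elements_inv: "k \<in> short_elements \<Longrightarrow> inv\<^bsub>G\<^esub> k \<in> short_elements"
  unfolding short_elements_def using action_dist_inv[of k x0 x0] by (simp add: dist_commute)

lemma dist_double_coset:
  assumes h: "h \<in> carrier G"
  shows "dist x0 (\<phi> (inv\<^bsub>G\<^esub> (g_pow i) \<otimes>\<^bsub>G\<^esub> h \<otimes>\<^bsub>G\<^esub> g_pow j) x0) =
    dist (\<phi> (g_pow i) x0) (\<phi> h (\<phi> (g_pow j) x0))"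
  using h action_dist_inv[of "g_pow i" x0] by (simp add: action_mult)

text \<open>If \<open>\<pi>(hA)\<close> is unbounded, the large-projection lemma puts far-away points of \<open>A\<close>
  near \<open>hA\<close>; by coboundedness these are orbit points \<open>g\<^sup>i x\<^sub>0\<close> near points \<open>h g\<^sup>j x\<^sub>0\<close>.\<close>

lemma unbounded_translate_meets_orbit:
  assumes h: "h \<in> carrier G" and unbounded: "\<not> bounded_translate h"
  shows "\<exists>i j. dist (\<phi> (g_pow i) x0) (\<phi> h (\<phi> (g_pow j) x0)) \<le> meet_radius \<and>
    R < dist (\<phi> (g_pow i) x0) x0"
proof -
  define y2 where "y2 = \<phi> h x0"
  define R' where "R' = max R 0 + \<delta> + dist (\<pi> y2) x0 + fellow_far_bound \<delta>"
  have "\<exists>a\<in>A. \<not> dist (\<pi> (\<phi> h a)) x0 \<le> R'"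
    using unbounded unfolding bounded_translate_def by blast
  then obtain a where a: "a \<in> A" "R' < dist (\<pi> (\<phi> h a)) x0"
    by (auto simp: not_le)
  define y1 where "y1 = \<phi> h a"
  have "dist (\<pi> y1) x0 \<le> dist (\<pi> y1) (\<pi> y2) + dist (\<pi> y2) x0" by (rule dist_triangle)
  then have far: "fellow_far_bound \<delta> < dist (\<pi> y1) (\<pi> y2)"
    using a delta_nonneg unfolding y1_def R'_def by linarith
  have "y1 \<in> \<phi> h ` A" "y2 \<in> \<phi> h ` A"
    unfolding y1_def y2_def using a(1) x0_in_A by blast+
  then obtain b where b: "b \<in> \<phi> h ` A" "dist (\<pi> y1) b \<le> fellow_near_bound \<delta>"
    using constricting_map_large_projection[OF constricting constricting_map_translate[OF constricting h]
        delta_nonneg _ _ far] by blast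
  then obtain a2 where a2: "a2 \<in> A" "b = \<phi> h a2" by blast
  obtain j where j: "dist a2 (\<phi> (g_pow j) x0) \<le> \<delta>"
    using near_orbit[OF a2(1)] by blast
  obtain i where i: "dist (\<pi> y1) (\<phi> (g_pow i) x0) \<le> \<delta>"
    using near_orbit[OF constricting_map_in[OF constricting]] by blast
  have "dist b (\<phi> h (\<phi> (g_pow j) x0)) \<le> \<delta>"
    using j a2(2) action_dist[OF h] by simp
  then have "dist (\<phi> (g_pow i) x0) (\<phi> h (\<phi> (g_pow j) x0)) \<le> meet_radius"
    using i b(2) dist_triangle[of "\<phi> (g_pow i) x0" "\<phi> h (\<phi> (g_pow j) x0)" b]
      dist_triangle[of "\<phi> (g_pow i) x0" b "\<pi> y1"]
    unfolding meet_radius_def by (simp add: dist_commute)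
  moreover have "R < dist (\<phi> (g_pow i) x0) x0"
    using i a(2) dist_triangle[of "\<pi> y1" x0 "\<phi> (g_pow i) x0"] zero_le_dist[of "\<pi> y2" x0]
      fellow_bounds(3)[OF delta_nonneg]
    unfolding y1_def R'_def by linarith
  ultimately show ?thesis by blast
qed

lemma infinitely_many_orbit_points_near_translate:
  assumes h: "h \<in> carrier G" and unbounded: "\<not> bounded_translate h"
  shows "infinite {i. \<exists>j. dist (\<phi> (g_pow i) x0) (\<phi> h (\<phi> (g_pow j) x0)) \<le> meet_radius}"
    (is "infinite ?I")
proof
  assume "finite ?I"
  then have "bdd_above ((\<lambda>i. dist (\<phi> (g_pow i) x0) x0) ` ?I)"
    by (intro bdd_above_finite finite_imageI)
  then obtain B where B: "\<And>i. i \<in> ?I \<Longrightarrow> dist (\<phi> (g_pow i) x0) x0 \<le> B"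
    by (auto simp: bdd_above_def)
  obtain i j where ij: "dist (\<phi> (g_pow i) x0) (\<phi> h (\<phi> (g_pow j) x0)) \<le> meet_radius"
    "B < dist (\<phi> (g_pow i) x0) x0"
    using unbounded_translate_meets_orbit[OF h unbounded, of B] by blast
  then have "i \<in> ?I" by blast
  then show False using B ij(2) by fastforce
qed

text \<open>Only finitely many elements move \<open>x\<^sub>0\<close> a bounded distance, so two of the infinitely many
  orbit points \<open>g\<^sup>i x\<^sub>0\<close> near \<open>h\<langle>g\<rangle>x\<^sub>0\<close> give the same element \<open>g\<^sup>-\<^sup>i h g\<^sup>j\<close>.\<close>

lemma unbounded_translate_commensurates:
  assumes h: "h \<in> carrier G" and unbounded: "\<not> bounded_translate h"
  shows "\<exists>m n. m \<noteq> 0 \<and> h \<otimes>\<^bsub>G\<^esub> g_pow m \<otimes>\<^bsub>G\<^esub> inv\<^bsub>G\<^esub> h = g_pow n"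
proof -
  define I where "I = {i. \<exists>j. dist (\<phi> (g_pow i) x0) (\<phi> h (\<phi> (g_pow j) x0)) \<le> meet_radius}"
  have "infinite I"
    unfolding I_def by (rule infinitely_many_orbit_points_near_translate[OF h unbounded])
  have "\<forall>i\<in>I. \<exists>j::int. dist (\<phi> (g_pow i) x0) (\<phi> h (\<phi> (g_pow j) x0)) \<le> meet_radius"
    unfolding I_def by blast
  then obtain J :: "int \<Rightarrow> int"
    where J: "\<forall>i\<in>I. dist (\<phi> (g_pow i) x0) (\<phi> h (\<phi> (g_pow (J i)) x0)) \<le> meet_radius"
    by (rule bchoice[THEN exE])
  define f where "f i = inv\<^bsub>G\<^esub> (g_pow i) \<otimes>\<^bsub>G\<^esub> h \<otimes>\<^bsub>G\<^esub> g_pow (J i)" for i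
  have "f ` I \<subseteq> short_elements"
    using J h dist_double_coset[OF h] unfolding f_def short_elements_def by auto
  then have "finite (f ` I)"
    using finite_short_elements by (rule finite_subset)
  then have "\<not> inj_on f I"
    using \<open>infinite I\<close> finite_imageD by blast
  then obtain i i' where ii: "i \<in> I" "i' \<in> I" "i \<noteq> i'" "f i = f i'"
    unfolding inj_on_def by blast
  then have conj: "h \<otimes>\<^bsub>G\<^esub> g_pow (J i - J i') \<otimes>\<^bsub>G\<^esub> inv\<^bsub>G\<^esub> h = g_pow (i - i')"
    using double_coset_eq_imp_conj[of "g_pow i" "g_pow i'" "g_pow (J i)" "g_pow (J i')" h] h
    unfolding f_def by (simp add: int_pow_diff g_carrier)
  moreover have "J i - J i' \<noteq> 0"
  proof
    assume "J i - J i' = 0"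
    then have "g_pow (i - i') = g_pow 0" using conj h by simp
    then show False using ii(3) g_pow_eq_iff[of "i - i'" 0] by simp
  qed
  ultimately show ?thesis by blast
qed

lemma double_coset_meets_short_elements:
  assumes h: "h \<in> carrier G" and unbounded: "\<not> bounded_translate h"
  shows "\<exists>i j. inv\<^bsub>G\<^esub> (g_pow i) \<otimes>\<^bsub>G\<^esub> h \<otimes>\<^bsub>G\<^esub> g_pow j \<in> short_elements"
  using unbounded_translate_meets_orbit[OF h unbounded] dist_double_coset[OF h] h
  unfolding short_elements_def by fastforce

lemma commensurates_if_translate_unbounded:
  assumes h: "h \<in> carrier G"
    and unbounded: "\<not> bounded_translate h \<or> \<not> bounded_translate (inv\<^bsub>G\<^esub> h)"
  shows "\<exists>m n. m \<noteq> 0 \<and> h \<otimes>\<^bsub>G\<^esub> g_pow m \<otimes>\<^bsub>G\<^esub> inv\<^bsub>G\<^esub> h = g_pow n"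
proof (cases "bounded_translate h")
  case False
  then show ?thesis using unbounded_translate_commensurates[OF h] by blast
next
  case True
  then obtain m n where mn: "m \<noteq> 0" "inv\<^bsub>G\<^esub> h \<otimes>\<^bsub>G\<^esub> g_pow m \<otimes>\<^bsub>G\<^esub> h = g_pow n"
    using unbounded_translate_commensurates[of "inv\<^bsub>G\<^esub> h"] unbounded h by auto
  then have conj: "h \<otimes>\<^bsub>G\<^esub> g_pow n \<otimes>\<^bsub>G\<^esub> inv\<^bsub>G\<^esub> h = g_pow m"
    using h by (simp add: m_assoc mult_inv_cancel_left flip: mn(2))
  moreover have "n \<noteq> 0"
  proof
    assume "n = 0"
    then have "g_pow m = g_pow 0" using conj h by simp
    then show False using mn(1) g_pow_eq_iff by blast
  qed
  ultimately show ?thesis by blast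
qed

lemma double_coset_cover:
  assumes h: "h \<in> carrier G"
    and unbounded: "\<not> bounded_translate h \<or> \<not> bounded_translate (inv\<^bsub>G\<^esub> h)"
  shows "\<exists>i j. \<exists>f\<in>short_elements. h = g_pow i \<otimes>\<^bsub>G\<^esub> f \<otimes>\<^bsub>G\<^esub> g_pow j"
proof -
  obtain i j where "inv\<^bsub>G\<^esub> (g_pow i) \<otimes>\<^bsub>G\<^esub> h \<otimes>\<^bsub>G\<^esub> g_pow j \<in> short_elements"
  proof (cases "bounded_translate h")
    case False
    then show ?thesis using double_coset_meets_short_elements[OF h] that by blast
  next
    case True
    then obtain i j where
      "inv\<^bsub>G\<^esub> (g_pow i) \<otimes>\<^bsub>G\<^esub> inv\<^bsub>G\<^esub> h \<otimes>\<^bsub>G\<^esub> g_pow j \<in> short_elements"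
      using double_coset_meets_short_elements[of "inv\<^bsub>G\<^esub> h"] unbounded h by auto
    moreover have "inv\<^bsub>G\<^esub> (inv\<^bsub>G\<^esub> (g_pow i) \<otimes>\<^bsub>G\<^esub> inv\<^bsub>G\<^esub> h \<otimes>\<^bsub>G\<^esub> g_pow j) =
        inv\<^bsub>G\<^esub> (g_pow j) \<otimes>\<^bsub>G\<^esub> h \<otimes>\<^bsub>G\<^esub> g_pow i"
      using h by (simp add: inv_mult_group m_assoc)
    ultimately have "inv\<^bsub>G\<^esub> (g_pow j) \<otimes>\<^bsub>G\<^esub> h \<otimes>\<^bsub>G\<^esub> g_pow i \<in> short_elements"
      by (metis short_elements_inv)
    then show ?thesis using that by blast
  qed
  moreover have "h = g_pow i \<otimes>\<^bsub>G\<^esub> (inv\<^bsub>G\<^esub> (g_pow i) \<otimes>\<^bsub>G\<^esub> h \<otimes>\<^bsub>G\<^esub> g_pow j) \<otimes>\<^bsub>G\<^esub> g_pow (- j)"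
    using h by (simp add: m_assoc mult_inv_cancel_left int_pow_neg g_carrier)
  ultimately show ?thesis by blast
qed

lemma virtually_cyclic_if_translates_unbounded:
  assumes "\<And>h. h \<in> carrier G \<Longrightarrow> \<not> bounded_translate h \<or> \<not> bounded_translate (inv\<^bsub>G\<^esub> h)"
  shows "virtually_cyclic G"
proof -
  have commensurate: "\<exists>m n. m \<noteq> 0 \<and> h \<otimes>\<^bsub>G\<^esub> g_pow m \<otimes>\<^bsub>G\<^esub> inv\<^bsub>G\<^esub> h = g_pow n"
    and cover: "\<exists>i j. \<exists>f\<in>short_elements. h = g_pow i \<otimes>\<^bsub>G\<^esub> f \<otimes>\<^bsub>G\<^esub> g_pow j"
    if "h \<in> carrier G" for h
    using commensurates_if_translate_unbounded[OF that assms[OF that]]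
      double_coset_cover[OF that assms[OF that]] by blast+
  have "short_elements \<subseteq> carrier G"
    unfolding short_elements_def by blast
  then have "finite (rcosets\<^bsub>G\<^esub> (generate G {g}))"
    using finite_rcosets_cyclic[OF g_carrier finite_short_elements] commensurate cover by blast
  then show ?thesis
    unfolding virtually_cyclic_def using g_carrier by blast
qed

end

section \<open>Ping-pong with a transverse translate\<close>

locale ping_pong_translate = constricting_axis +
  fixes h and Rb :: real and M :: int
  assumes h_carrier: "h \<in> carrier G"
    and translate_bound: "\<forall>a\<in>A. dist (\<pi> (\<phi> h a)) x0 \<le> Rb"
    and inv_translate_bound: "\<forall>a\<in>A. dist (\<pi> (\<phi> (inv\<^bsub>G\<^esub> h) a)) x0 \<le> Rb"
    and M_bound: "\<forall>i::int. dist x0 (\<phi> (g [^]\<^bsub>G\<^esub> i) x0) \<le> Rb + transverse_bound \<delta> + 2 * (close_bound \<delta> + \<delta>)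
      \<longrightarrow> \<bar>i\<bar> < M"
begin

definition transverse_radius :: real where
  "transverse_radius = Rb + transverse_bound \<delta>"

definition region_radius :: real where
  "region_radius = close_bound \<delta> + \<delta>"

definition region :: "bool \<Rightarrow> _ set" where
  "region s = {x. \<exists>i. (if s then M \<le> i else i \<le> - M) \<and> dist (\<pi> x) (\<phi> (g_pow i) x0) \<le> region_radius}"

lemma radii_bounds: "0 \<le> Rb" "\<delta> \<le> transverse_radius" "Rb \<le> transverse_radius" "\<delta> \<le> region_radius"
proof -
  show "0 \<le> Rb"
    using translate_bound x0_in_A zero_le_dist order_trans by blast
  then show "\<delta> \<le> transverse_radius" "Rb \<le> transverse_radius"
    unfolding transverse_radius_def using transverse_bound_ge[OF delta_nonneg] delta_nonneg by linarith+
  show "\<delta> \<le> region_radius"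
    unfolding region_radius_def using close_bound_ge[OF delta_nonneg] delta_nonneg by linarith
qed

lemma transverse:
  "dist (\<pi> x) x0 \<le> transverse_radius \<or> dist (\<pi> (\<phi> (inv\<^bsub>G\<^esub> h) x)) x0 \<le> transverse_radius"
proof -
  have "\<forall>b\<in>\<phi> h ` A. dist (\<pi> b) x0 \<le> Rb"
    using translate_bound by blast
  moreover have "\<forall>b\<in>A. dist (\<phi> h (\<pi> (\<phi> (inv\<^bsub>G\<^esub> h) b))) (\<phi> h x0) \<le> Rb"
    using inv_translate_bound action_dist[OF h_carrier] by simp
  ultimately have "dist (\<pi> x) x0 \<le> Rb + transverse_bound \<delta> \<or>
      dist (\<phi> h (\<pi> (\<phi> (inv\<^bsub>G\<^esub> h) x))) (\<phi> h x0) \<le> Rb + transverse_bound \<delta>"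
    by (rule constricting_maps_transverse[OF constricting constricting_map_translate[OF constricting h_carrier]
        delta_nonneg])
  then show ?thesis
    using action_dist[OF h_carrier] unfolding transverse_radius_def by simp
qed

lemma region_far: "x \<in> region s \<Longrightarrow> transverse_radius < dist (\<pi> x) x0"
proof -
  assume "x \<in> region s"
  then obtain i where i: "if s then M \<le> i else i \<le> - M" "dist (\<pi> x) (\<phi> (g_pow i) x0) \<le> region_radius"
    unfolding region_def by blast
  have "\<not> \<bar>i\<bar> < M" using i(1) by (cases s) auto
  then have "\<not> dist x0 (\<phi> (g_pow i) x0) \<le> transverse_radius + 2 * region_radius"
    using M_bound unfolding transverse_radius_def region_radius_def by blast
  then have "transverse_radius + 2 * region_radius < dist x0 (\<phi> (g_pow i) x0)"
    by simp
  moreover have "dist x0 (\<phi> (g_pow i) x0) \<le> dist x0 (\<pi> x) + dist (\<pi> x) (\<phi> (g_pow i) x0)"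
    by (rule dist_triangle)
  ultimately show ?thesis
    using i(2) radii_bounds(4) delta_nonneg by (simp add: dist_commute)
qed

lemma region_disjoint: "x \<in> region True \<Longrightarrow> x \<in> region False \<Longrightarrow> False"
proof -
  assume "x \<in> region True" "x \<in> region False"
  then obtain i j where ij: "M \<le> i" "dist (\<pi> x) (\<phi> (g_pow i) x0) \<le> region_radius"
    "j \<le> - M" "dist (\<pi> x) (\<phi> (g_pow j) x0) \<le> region_radius"
    unfolding region_def by auto
  have "dist x0 (\<phi> (g_pow (j - i)) x0) \<le> 2 * region_radius"
    using ij(2,4) dist_triangle[of "\<phi> (g_pow i) x0" "\<phi> (g_pow j) x0" "\<pi> x"] dist_orbit[of i x0 j]
    by (simp add: dist_commute)
  moreover have "0 \<le> transverse_radius"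
    using radii_bounds delta_nonneg by linarith
  ultimately have "dist x0 (\<phi> (g_pow (j - i)) x0) \<le> transverse_radius + 2 * region_radius"
    by linarith
  then have "\<bar>j - i\<bar> < M"
    using M_bound unfolding transverse_radius_def region_radius_def by blast
  then show False using ij(1,3) by linarith
qed

lemma region_step:
  assumes "x \<notin> region (\<not> s)"
  shows "\<phi> (g_pow (if s then 2 * M else - (2 * M))) x \<in> region s"
proof -
  define c where "c = (if s then 2 * M else - (2 * M))"
  obtain i where i: "dist (\<pi> x) (\<phi> (g_pow i) x0) \<le> \<delta>"
    using near_orbit[OF constricting_map_in[OF constricting]] by blast
  have "\<not> (if s then i \<le> - M else M \<le> i)"
    using assms i radii_bounds(4) unfolding region_def by (cases s) force+
  then have sign: "if s then M \<le> c + i else c + i \<le> - M"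
    unfolding c_def by (cases s) auto
  have "dist (\<phi> (g_pow c) (\<pi> x)) (\<phi> (g_pow (c + i)) x0) \<le> \<delta>"
    using i action_dist[OF g_pow_closed] action_g_pow_add[of c i x0] by simp
  then have "dist (\<pi> (\<phi> (g_pow c) x)) (\<phi> (g_pow (c + i)) x0) \<le> region_radius"
    using projection_equivariant[of c x]
      dist_triangle[of "\<pi> (\<phi> (g_pow c) x)" "\<phi> (g_pow (c + i)) x0" "\<phi> (g_pow c) (\<pi> x)"]
    unfolding region_radius_def by linarith
  then show ?thesis
    using sign unfolding region_def c_def by blast
qed

definition ping_pong_set :: "bool \<times> bool \<Rightarrow> _ set" where
  "ping_pong_set l =
    (if fst l then {x. \<phi> (inv\<^bsub>G\<^esub> h) x \<in> region (snd l)} else region (snd l))"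

abbreviation letter_g where "letter_g \<equiv> g_pow (2 * M)"

abbreviation letter_h where "letter_h \<equiv> h \<otimes>\<^bsub>G\<^esub> g_pow (2 * M) \<otimes>\<^bsub>G\<^esub> inv\<^bsub>G\<^esub> h"

lemma ping_pong_set_step:
  assumes x: "x \<notin> ping_pong_set (fst l, \<not> snd l)"
  shows "\<phi> (letter_val G letter_g letter_h l) x \<in> ping_pong_set l"
proof -
  define c where "c = (if snd l then 2 * M else - (2 * M))"
  have letter: "letter_val G letter_g letter_h l =
      (if fst l then h \<otimes>\<^bsub>G\<^esub> g_pow c \<otimes>\<^bsub>G\<^esub> inv\<^bsub>G\<^esub> h else g_pow c)"
    using letter_val_conj[OF g_pow_closed h_carrier] unfolding c_def
    by (simp add: Let_def int_pow_neg g_carrier)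
  show ?thesis
  proof (cases "fst l")
    case False
    then show ?thesis
      using x region_step[of x "snd l"] unfolding letter ping_pong_set_def c_def by simp
  next
    case True
    have "\<phi> (inv\<^bsub>G\<^esub> h) (\<phi> (h \<otimes>\<^bsub>G\<^esub> g_pow c \<otimes>\<^bsub>G\<^esub> inv\<^bsub>G\<^esub> h) x) = \<phi> (g_pow c) (\<phi> (inv\<^bsub>G\<^esub> h) x)"
      using h_carrier by (simp add: action_mult action_inv_left)
    then show ?thesis
      using True x region_step[of "\<phi> (inv\<^bsub>G\<^esub> h) x" "snd l"] unfolding letter ping_pong_set_def c_def
      by simp
  qed
qed

lemma ping_pong_sets_disjoint:
  assumes ne: "l \<noteq> l'"
  shows "ping_pong_set l \<inter> ping_pong_set l' = {}"
proof (rule ccontr)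
  assume "ping_pong_set l \<inter> ping_pong_set l' \<noteq> {}"
  then obtain x where x: "x \<in> ping_pong_set l" "x \<in> ping_pong_set l'" by blast
  show False
  proof (cases "fst l = fst l'")
    case True
    then have "snd l' = (\<not> snd l)" using ne by (cases l, cases l') auto
    then obtain y where "y \<in> region True" "y \<in> region False"
      using x True unfolding ping_pong_set_def by (cases "fst l"; cases "snd l") auto
    then show False by (rule region_disjoint)
  next
    case False
    then obtain s s' where "x \<in> region s" "\<phi> (inv\<^bsub>G\<^esub> h) x \<in> region s'"
      using x unfolding ping_pong_set_def by (cases "fst l") auto
    then have "transverse_radius < dist (\<pi> x) x0"
      and "transverse_radius < dist (\<pi> (\<phi> (inv\<^bsub>G\<^esub> h) x)) x0"
      using region_far by blast+
    then show False using transverse[of x] by linarith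
  qed
qed

lemma base_point_outside_ping_pong_sets: "x0 \<notin> ping_pong_set l"
proof -
  have "dist (\<pi> x0) x0 \<le> transverse_radius"
    using constricting_map_near[OF constricting x0_in_A] radii_bounds(2) by (simp add: dist_commute)
  then have "x0 \<notin> region s" for s
    using region_far[of x0 s] by linarith
  moreover have "dist (\<pi> (\<phi> (inv\<^bsub>G\<^esub> h) x0)) x0 \<le> transverse_radius"
    using inv_translate_bound x0_in_A radii_bounds(3) by fastforce
  then have "\<phi> (inv\<^bsub>G\<^esub> h) x0 \<notin> region s" for s
    using region_far[of "\<phi> (inv\<^bsub>G\<^esub> h) x0" s] by linarith
  ultimately show ?thesis
    unfolding ping_pong_set_def by simp
qed

lemma free_basis: "free_basis2 G letter_g letter_h"
  using ping_pong[OF action_mult action_one g_pow_closed _ ping_pong_set_step ping_pong_sets_disjoint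
      base_point_outside_ping_pong_sets] h_carrier by simp

end

context constricting_axis
begin

lemma free_subgroup_if_bounded_translates:
  assumes h: "h \<in> carrier G" and "bounded_translate h" "bounded_translate (inv\<^bsub>G\<^esub> h)"
  shows "has_free_subgroup_rank2 G"
proof -
  obtain R1 R2 where "\<forall>a\<in>A. dist (\<pi> (\<phi> h a)) x0 \<le> R1" "\<forall>a\<in>A. dist (\<pi> (\<phi> (inv\<^bsub>G\<^esub> h) a)) x0 \<le> R2"
    using assms(2,3) unfolding bounded_translate_def by blast
  then have bounds: "\<forall>a\<in>A. dist (\<pi> (\<phi> h a)) x0 \<le> max R1 R2"
    "\<forall>a\<in>A. dist (\<pi> (\<phi> (inv\<^bsub>G\<^esub> h) a)) x0 \<le> max R1 R2"
    by (auto intro: le_max_iff_disj[THEN iffD2])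
  obtain M where "\<forall>i. dist x0 (\<phi> (g_pow i) x0) \<le> max R1 R2 + transverse_bound \<delta> + 2 * (close_bound \<delta> + \<delta>)
      \<longrightarrow> \<bar>i\<bar> < M"
    using orbit_displacement_bounded by blast
  then interpret ping_pong_translate \<mu> \<nu> G \<phi> \<Gamma> g \<delta> A \<pi> x0 h "max R1 R2" M
    using h bounds by unfold_locales
  show ?thesis
    unfolding has_free_subgroup_rank2_def using free_basis by blast
qed

lemma virtually_cyclic_or_free: "virtually_cyclic G \<or> has_free_subgroup_rank2 G"
  using free_subgroup_if_bounded_translates virtually_cyclic_if_translates_unbounded by blast

end

theorem mainTheorem2:
  fixes \<mu> \<nu> :: real
    and G :: "('g, 'm) monoid_scheme"
    and \<phi> :: "'g \<Rightarrow> 'x::metric_space \<Rightarrow> 'x"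
    and \<Gamma> :: "'x rpath set"
  assumes "path_system_group \<mu> \<nu> G \<phi> \<Gamma>"
    and "\<exists>g. constricting_element G \<phi> \<Gamma> g"
  shows "virtually_cyclic G \<or> has_free_subgroup_rank2 G"
proof -
  obtain g \<delta> A \<pi> where g: "g \<in> carrier G" "infinite_order G g" "0 \<le> \<delta>"
    "\<forall>k\<in>generate G {g}. \<phi> k ` A \<subseteq> A" "constricting_map \<Gamma> \<delta> A \<pi>"
    "\<forall>a\<in>A. \<forall>a'\<in>A. \<exists>k\<in>generate G {g}. dist a (\<phi> k a') \<le> \<delta>"
    using assms(2) unfolding constricting_element_def constricting_set_def by blast
  interpret path_system_action \<mu> \<nu> G \<phi> \<Gamma>
    using assms(1) by unfold_locales
  interpret constricting_axis \<mu> \<nu> G \<phi> \<Gamma> g \<delta> A \<pi> "\<pi> undefined"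
    using g constricting_map_in[OF g(5)] by unfold_locales
  show ?thesis by (rule virtually_cyclic_or_free)
qed

end
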